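(* Let $t\ge0$, $R>1$, and let $h$ be a minimizer of $E$ over $\mathcal A_h$ satisfying $h(r)\ge\frac23$ for all $r\in[1,R]$. Then for every $x$ with $1\le|x|\le R$ (where the frame $(\mathbf n,\mathbf m,\mathbf p)$ is defined) and every $\mathbf W\in S_0$, \[ \psi(\mathbf W)+\frac{3h(|x|)}{8}\left(2\,\mathbf E_0\cdot\mathbf W+|\mathbf W|^2\right)^2\ge0, \] where $\mathbf E_0=\sqrt{3/2}\,(\hat x\otimes\hat x-\mathbf I/3)$.
   Context: $S_0$: real symmetric traceless $3\times3$ matrices; $\mathbf A\cdot\mathbf B=A_{ij}B_{ij}$, $|\mathbf W|^2=\mathbf W\cdot\mathbf W$. $h_+=\frac{3+\sqrt{9+8t}}{4}$; $E[h]=\int_1^R\frac{r^2}{2}(h')^2+3h^2+r^2[\frac t8(1-h^2)^2+\frac{h_+}{8}(1+3h^4-4h^3)]dr$ on $\mathcal A_h=\{h\in L^2(1,R): h'\in L^2((1,R);r^2dr),\ h(1)=h(R)=1\}$. For $x$ with spherical coordinates $(r,\theta,\phi)$: $\mathbf n=\hat x=(\sin\theta\cos\phi,\sin\theta\sin\phi,\cos\theta)$, $\mathbf m=(\cos\theta\cos\phi,\cos\theta\sin\phi,-\sin\theta)$, $\mathbf p=(-\sin\phi,\cos\phi,0)$. Put $\mathbf E=\mathbf n\otimes\mathbf n-\mathbf I/3$, $\mathbf F=\mathbf n\otimes\mathbf m+\mathbf m\otimes\mathbf n$, $\mathbf G=\mathbf n\otimes\mathbf p+\mathbf p\otimes\mathbf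 n$, $\mathbf X=\mathbf m\otimes\mathbf p+\mathbf p\otimes\mathbf m$, $\mathbf Y=\mathbf m\otimes\mathbf m-\mathbf p\otimes\mathbf p$, and write $\mathbf W=w_0\mathbf E+w_1\mathbf F+w_2\mathbf G+w_3\mathbf X+w_4\mathbf Y$. Define $\psi(\mathbf W)=-\frac{\sqrt6}{2}\mathrm{tr}\,\mathbf W^3-\frac12w_0^2+\frac92w_3^2+\frac92w_4^2$. *)

theory Defs
  imports "HOL-Analysis.Analysis"
begin

type_synonym mat3 = "real^3^3"

definition hplus :: "real \<Rightarrow> real" where
  "hplus t = (3 + sqrt (9 + 8 * t)) / 4"

text \<open>Integrand of the reduced energy; g plays the role of h'.\<close>
definition energy_density :: "real \<Rightarrow> real \<Rightarrow> real \<Rightarrow> real \<Rightarrow> real" where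
  "energy_density t r hv gv =
     r^2 / 2 * gv^2 + 3 * hv^2
     + r^2 * (t / 8 * (1 - hv^2)^2 + hplus t / 8 * (1 + 3 * hv^4 - 4 * hv^3))"

definition energy :: "real \<Rightarrow> real \<Rightarrow> (real \<Rightarrow> real) \<Rightarrow> (real \<Rightarrow> real) \<Rightarrow> real" where
  "energy t R h g = (LINT r:{1..R}|lborel. energy_density t r (h r) (g r))"

text \<open>Admissible class A_h: h (continuous representative on [1,R]) has weak derivative g
  with g in L^2((1,R); r^2 dr); boundary values h(1) = h(R) = 1.  Since R is finite,
  g is then integrable on [1,R], h is absolutely continuous and in L^2(1,R).\<close>
definition admissible :: "real \<Rightarrow> (real \<Rightarrow> real) \<Rightarrow> (real \<Rightarrow> real) \<Rightarrow> bool" where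
  "admissible R h g \<longleftrightarrow>
     g \<in> borel_measurable lborel \<and>
     set_integrable lborel {1..R} g \<and>
     set_integrable lborel {1..R} (\<lambda>r. r^2 * (g r)^2) \<and>
     (\<forall>r\<in>{1..R}. h r = 1 + (LINT s:{1..r}|lborel. g s)) \<and>
     h R = 1"

definition is_minimizer :: "real \<Rightarrow> real \<Rightarrow> (real \<Rightarrow> real) \<Rightarrow> bool" where
  "is_minimizer t R h \<longleftrightarrow>
     (\<exists>g. admissible R h g \<and>
        (\<forall>k gk. admissible R k gk \<longrightarrow> energy t R h g \<le> energy t R k gk))"

definition outer :: "real^3 \<Rightarrow> real^3 \<Rightarrow> mat3" where
  "outer u v = (\<chi> i j. u$i * v$j)"

definition mdot :: "mat3 \<Rightarrow> mat3 \<Rightarrow> real" where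
  "mdot A B = (\<Sum>i\<in>UNIV. \<Sum>j\<in>UNIV. A$i$j * B$i$j)"

definition mtrace :: "mat3 \<Rightarrow> real" where
  "mtrace A = (\<Sum>i\<in>UNIV. A$i$i)"

definition S0 :: "mat3 set" where
  "S0 = {A. transpose A = A \<and> mtrace A = 0}"

definition nvec :: "real \<Rightarrow> real \<Rightarrow> real^3" where
  "nvec \<theta> \<phi> = vector [sin \<theta> * cos \<phi>, sin \<theta> * sin \<phi>, cos \<theta>]"
definition mvec :: "real \<Rightarrow> real \<Rightarrow> real^3" where
  "mvec \<theta> \<phi> = vector [cos \<theta> * cos \<phi>, cos \<theta> * sin \<phi>, - sin \<theta>]"
definition pvec :: "real \<Rightarrow> real^3" where
  "pvec \<phi> = vector [- sin \<phi>, cos \<phi>, 0]"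

definition Emat :: "real \<Rightarrow> real \<Rightarrow> mat3" where
  "Emat \<theta> \<phi> = outer (nvec \<theta> \<phi>) (nvec \<theta> \<phi>) - (1/3) *\<^sub>R mat 1"
definition Fmat :: "real \<Rightarrow> real \<Rightarrow> mat3" where
  "Fmat \<theta> \<phi> = outer (nvec \<theta> \<phi>) (mvec \<theta> \<phi>) + outer (mvec \<theta> \<phi>) (nvec \<theta> \<phi>)"
definition Gmat :: "real \<Rightarrow> real \<Rightarrow> mat3" where
  "Gmat \<theta> \<phi> = outer (nvec \<theta> \<phi>) (pvec \<phi>) + outer (pvec \<phi>) (nvec \<theta> \<phi>)"
definition Xmat :: "real \<Rightarrow> real \<Rightarrow> mat3" where
  "Xmat \<theta> \<phi> = outer (mvec \<theta> \<phi>) (pvec \<phi>) + outer (pvec \<phi>) (mvec \<theta> \<phi>)"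
definition Ymat :: "real \<Rightarrow> real \<Rightarrow> mat3" where
  "Ymat \<theta> \<phi> = outer (mvec \<theta> \<phi>) (mvec \<theta> \<phi>) - outer (pvec \<phi>) (pvec \<phi>)"

text \<open>psi, given the frame coefficients w0,...,w4 of W.\<close>
definition psi :: "mat3 \<Rightarrow> real \<Rightarrow> real \<Rightarrow> real \<Rightarrow> real" where
  "psi W w0 w3 w4 = - sqrt 6 / 2 * mtrace (W ** W ** W) - 1/2 * w0^2 + 9/2 * w3^2 + 9/2 * w4^2"

end

theory Submission
  imports Defs
begin

text \<open>Let Q be the orthogonal matrix with rows n, m, p. Then E, F, G, X, Y are the
  conjugates by Q of constant matrices, so W = Q^T D Q with D depending linearly on
  w0, ..., w4; as conjugation preserves products, traces and the Frobenius inner product, the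
  claim becomes a polynomial inequality in w0, ..., w4. With V = w1^2 + w2^2 and
  \<rho> = |(w3, w4)|, Cauchy-Schwarz bounds the mixed cubic term w4 (w1^2 - w2^2) + 2 w3 w1 w2
  by \<rho> V, and h \<ge> 2/3 (the only property of the minimizer that is needed) gives
  3h/8 \<ge> 1/4. After rescaling w0 = \<surd>6 b, \<rho> = \<surd>6 u, what remains is a quartic in
  b, u and V \<ge> 0 of the form Z^2 + t^2 (3/4 + 2t) with t = b + 3u: it is nonnegative directly
  when t \<ge> -3/8, and otherwise because Z \<ge> m > 0 where m^2 + t^2 (3/4 + 2t) is a square.\<close>

definition mat_conj :: "real^'n^'n \<Rightarrow> real^'n^'n \<Rightarrow> real^'n^'n" where
  "mat_conj Q A = transpose Q ** A ** Q"

lemma matrix_add_rdistrib: "(A + B) ** C = A ** C + B ** C"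
  by (vector matrix_matrix_mult_def sum.distrib[symmetric] field_simps)

lemma mat_conj_add: "mat_conj Q (A + B) = mat_conj Q A + mat_conj Q B"
  unfolding mat_conj_def by (simp add: matrix_add_ldistrib matrix_add_rdistrib)

lemma mat_conj_diff: "mat_conj Q (A - B) = mat_conj Q A - mat_conj Q B"
  using mat_conj_add[of Q "A - B" B] by simp

lemma mat_conj_scaleR: "mat_conj Q (c *\<^sub>R A) = c *\<^sub>R mat_conj Q A"
  unfolding mat_conj_def by (simp add: matrix_scalar_ac scalar_matrix_assoc)

lemma mat_conj_mult:
  "Q ** transpose Q = mat 1 \<Longrightarrow> mat_conj Q A ** mat_conj Q B = mat_conj Q (A ** B)"
  unfolding mat_conj_def by (metis matrix_mul_assoc matrix_mul_rid)

lemma trace_mat_conj: "Q ** transpose Q = mat 1 \<Longrightarrow> trace (mat_conj Q A) = trace A"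
  unfolding mat_conj_def by (metis matrix_mul_assoc matrix_mul_rid trace_mul_sym)

lemma transpose_mat_conj: "transpose (mat_conj Q A) = mat_conj Q (transpose A)"
  unfolding mat_conj_def by (simp add: matrix_transpose_mul matrix_mul_assoc)

lemma mat_conj_mat_1: "transpose Q ** Q = mat 1 \<Longrightarrow> mat_conj Q (mat 1) = mat 1"
  unfolding mat_conj_def by simp

lemma mat_conj_outer: "mat_conj Q (outer a b) = outer (transpose Q *v a) (transpose Q *v b)"
  unfolding mat_conj_def
  by (simp add: vec_eq_iff matrix_matrix_mult_def matrix_vector_mult_def outer_def sum_3
      transpose_def algebra_simps)

lemma mdot_eq_trace: "mdot A B = trace (transpose A ** B)"
  unfolding mdot_def trace_def matrix_matrix_mult_def transpose_def by (simp add: sum_3)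

lemma mtrace_eq_trace: "mtrace A = trace A"
  unfolding mtrace_def trace_def ..

lemma mdot_mat_conj: "Q ** transpose Q = mat 1 \<Longrightarrow> mdot (mat_conj Q A) (mat_conj Q B) = mdot A B"
  unfolding mdot_eq_trace transpose_mat_conj by (simp add: mat_conj_mult trace_mat_conj)

lemma mdot_scaleR_left: "mdot (c *\<^sub>R A) B = c * mdot A B"
  unfolding mdot_def by (simp add: sum_distrib_left mult.assoc)

lemma inner_vec3: "(u::real^3) \<bullet> v = u$1 * v$1 + u$2 * v$2 + u$3 * v$3"
  unfolding inner_vec_def sum_3 by simp

lemma frame_orthonormal:
  "nvec \<theta> \<phi> \<bullet> nvec \<theta> \<phi> = 1" "mvec \<theta> \<phi> \<bullet> mvec \<theta> \<phi> = 1" "pvec \<phi> \<bullet> pvec \<phi> = 1"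
  "nvec \<theta> \<phi> \<bullet> mvec \<theta> \<phi> = 0" "nvec \<theta> \<phi> \<bullet> pvec \<phi> = 0" "mvec \<theta> \<phi> \<bullet> pvec \<phi> = 0"
  using sin_cos_squared_add[of \<theta>] sin_cos_squared_add[of \<phi>]
  unfolding inner_vec3 nvec_def mvec_def pvec_def by (simp_all, algebra+)

definition frame :: "real \<Rightarrow> real \<Rightarrow> mat3" where
  "frame \<theta> \<phi> = vector [nvec \<theta> \<phi>, mvec \<theta> \<phi>, pvec \<phi>]"

lemma frame_mult_transpose: "frame \<theta> \<phi> ** transpose (frame \<theta> \<phi>) = mat 1"
proof -
  have "(frame \<theta> \<phi> ** transpose (frame \<theta> \<phi>))$i$j = frame \<theta> \<phi> $ i \<bullet> frame \<theta> \<phi> $ j" for i j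
    unfolding matrix_matrix_mult_def transpose_def inner_vec_def by simp
  then show ?thesis
    unfolding vec_eq_iff forall_3 frame_def
    by (simp add: mat_def frame_orthonormal inner_commute[of "pvec \<phi>"]
        inner_commute[of "mvec \<theta> \<phi>" "nvec \<theta> \<phi>"])
qed

lemma transpose_frame_mult: "transpose (frame \<theta> \<phi>) ** frame \<theta> \<phi> = mat 1"
  using frame_mult_transpose orthogonal_matrix[of "transpose (frame \<theta> \<phi>)"]
  unfolding orthogonal_matrix_def by simp

lemma transpose_frame_axis:
  "transpose (frame \<theta> \<phi>) *v axis 1 1 = nvec \<theta> \<phi>"
  "transpose (frame \<theta> \<phi>) *v axis 2 1 = mvec \<theta> \<phi>"
  "transpose (frame \<theta> \<phi>) *v axis 3 1 = pvec \<phi>"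
  unfolding frame_def
  by (simp_all add: vec_eq_iff forall_3 matrix_vector_mult_def transpose_def sum_3 axis_def)

definition E_std :: mat3 where "E_std = outer (axis 1 1) (axis 1 1) - (1/3) *\<^sub>R mat 1"
definition F_std :: mat3 where "F_std = outer (axis 1 1) (axis 2 1) + outer (axis 2 1) (axis 1 1)"
definition G_std :: mat3 where "G_std = outer (axis 1 1) (axis 3 1) + outer (axis 3 1) (axis 1 1)"
definition X_std :: mat3 where "X_std = outer (axis 2 1) (axis 3 1) + outer (axis 3 1) (axis 2 1)"
definition Y_std :: mat3 where "Y_std = outer (axis 2 1) (axis 2 1) - outer (axis 3 1) (axis 3 1)"

lemma Emat_eq_mat_conj: "Emat \<theta> \<phi> = mat_conj (frame \<theta> \<phi>) E_std"
  unfolding E_std_def Emat_def mat_conj_diff mat_conj_scaleR mat_conj_outer transpose_frame_axis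
    mat_conj_mat_1[OF transpose_frame_mult] ..

lemma Fmat_eq_mat_conj: "Fmat \<theta> \<phi> = mat_conj (frame \<theta> \<phi>) F_std"
  unfolding F_std_def Fmat_def mat_conj_add mat_conj_outer transpose_frame_axis ..

lemma Gmat_eq_mat_conj: "Gmat \<theta> \<phi> = mat_conj (frame \<theta> \<phi>) G_std"
  unfolding G_std_def Gmat_def mat_conj_add mat_conj_outer transpose_frame_axis ..

lemma Xmat_eq_mat_conj: "Xmat \<theta> \<phi> = mat_conj (frame \<theta> \<phi>) X_std"
  unfolding X_std_def Xmat_def mat_conj_add mat_conj_outer transpose_frame_axis ..

lemma Ymat_eq_mat_conj: "Ymat \<theta> \<phi> = mat_conj (frame \<theta> \<phi>) Y_std"
  unfolding Y_std_def Ymat_def mat_conj_diff mat_conj_outer transpose_frame_axis ..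

definition frame_coords :: "real \<Rightarrow> real \<Rightarrow> real \<Rightarrow> real \<Rightarrow> real \<Rightarrow> mat3" where
  "frame_coords w0 w1 w2 w3 w4 =
     w0 *\<^sub>R E_std + w1 *\<^sub>R F_std + w2 *\<^sub>R G_std + w3 *\<^sub>R X_std + w4 *\<^sub>R Y_std"

lemma frame_expansion_eq_mat_conj:
  "w0 *\<^sub>R Emat \<theta> \<phi> + w1 *\<^sub>R Fmat \<theta> \<phi> + w2 *\<^sub>R Gmat \<theta> \<phi> + w3 *\<^sub>R Xmat \<theta> \<phi> + w4 *\<^sub>R Ymat \<theta> \<phi>
     = mat_conj (frame \<theta> \<phi>) (frame_coords w0 w1 w2 w3 w4)"
  unfolding frame_coords_def mat_conj_add mat_conj_scaleR Emat_eq_mat_conj Fmat_eq_mat_conj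
    Gmat_eq_mat_conj Xmat_eq_mat_conj Ymat_eq_mat_conj ..

lemma frame_coords_entries:
  "frame_coords w0 w1 w2 w3 w4 =
     vector [vector [2/3*w0, w1, w2], vector [w1, -w0/3 + w4, w3], vector [w2, w3, -w0/3 - w4]]"
  unfolding frame_coords_def E_std_def F_std_def G_std_def X_std_def Y_std_def
  by (simp add: vec_eq_iff forall_3 outer_def axis_def mat_def)

lemma trace_frame_coords_cube:
  "trace (frame_coords w0 w1 w2 w3 w4 ** frame_coords w0 w1 w2 w3 w4 ** frame_coords w0 w1 w2 w3 w4)
     = 2*w0^3/9 + w0*(w1^2 + w2^2) - 2*w0*(w3^2 + w4^2) + 3*(w4*(w1^2 - w2^2) + 2*w3*w1*w2)"
  unfolding frame_coords_entries trace_def sum_3 matrix_matrix_mult_def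
  by (simp add: power2_eq_square power3_eq_cube field_simps)

lemma mdot_frame_coords_self:
  "mdot (frame_coords w0 w1 w2 w3 w4) (frame_coords w0 w1 w2 w3 w4)
     = 2/3*w0^2 + 2*(w1^2 + w2^2 + w3^2 + w4^2)"
  unfolding frame_coords_entries mdot_def sum_3 by (simp add: power2_eq_square algebra_simps)

lemma mdot_E_std_frame_coords: "mdot E_std (frame_coords w0 w1 w2 w3 w4) = 2/3*w0"
  unfolding frame_coords_entries mdot_def sum_3 E_std_def
  by (simp add: outer_def axis_def mat_def algebra_simps)

text \<open>Cauchy-Schwarz for (w4, w3) and (w1^2 - w2^2, 2 w1 w2), whose norm is w1^2 + w2^2.\<close>

lemma frame_cubic_term_le:
  fixes w1 w2 w3 w4 :: real
  shows "w4*(w1^2 - w2^2) + 2*w3*w1*w2 \<le> sqrt (w3^2 + w4^2) * (w1^2 + w2^2)"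
proof -
  let ?q = "w4*(w1^2 - w2^2) + 2*w3*w1*w2"
  have "(sqrt (w3^2 + w4^2) * (w1^2 + w2^2))^2 - ?q^2 = (w3*(w1^2 - w2^2) - 2*w4*w1*w2)^2"
    unfolding power_mult_distrib by (simp add: power2_eq_square algebra_simps)
  then have "?q^2 \<le> (sqrt (w3^2 + w4^2) * (w1^2 + w2^2))^2"
    by (metis diff_ge_0_iff_ge zero_le_power2)
  then show ?thesis by (rule power2_le_imp_le) simp
qed

lemma reduced_quartic_nonneg:
  fixes b u V :: real
  assumes "V \<ge> 0"
  shows "V^2 + V*(4*b^2 + b + 12*u^2 - 9*u) + b^2*(2*b + 1)^2 + u^2*(24*b^2 + 60*b + 27) + 36*u^4 \<ge> 0"
proof -
  define t where "t = b + 3*u"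
  define m where "m = t^2/2 - t - 3/8"
  define Z where "Z = V + 24*(u - (1 + 2*t)/8)^2 + m"
  have sos: "V^2 + V*(4*b^2 + b + 12*u^2 - 9*u) + b^2*(2*b + 1)^2 + u^2*(24*b^2 + 60*b + 27) + 36*u^4
        = Z^2 + t^2*(3/4 + 2*t)"
    unfolding Z_def m_def t_def by (simp add: power2_eq_square power4_eq_xxxx field_simps)
  show ?thesis
  proof (cases "t \<ge> -3/8")
    case True
    then show ?thesis unfolding sos by simp
  next
    case False
    have "t^2/2 \<ge> 0" by simp
    with False have "m > 0" unfolding m_def by linarith
    moreover have "Z \<ge> m" unfolding Z_def using assms by simp
    ultimately have "Z^2 \<ge> m^2" by (simp add: power_mono)
    moreover have "m^2 + t^2*(3/4 + 2*t) = ((2*t + 1)*(2*t + 3))^2/64"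
      unfolding m_def by (simp add: power2_eq_square field_simps)
    moreover have "((2*t + 1)*(2*t + 3))^2/64 \<ge> 0" by simp
    ultimately show ?thesis unfolding sos by linarith
  qed
qed

lemma reduced_psi_bound_nonneg:
  fixes w0 \<rho> V :: real
  assumes "V \<ge> 0"
  shows "- sqrt 6/2 * (2*w0^3/9 + w0*V - 2*w0*\<rho>^2 + 3*(\<rho>*V)) - w0^2/2 + 9/2*\<rho>^2
           + (sqrt 6*w0/3 + w0^2/3 + V + \<rho>^2)^2 \<ge> 0"
proof -
  define s where "s = sqrt 6"
  have s2: "s * s = 6" and s0: "s > 0" unfolding s_def by simp_all
  then have ss: "s * (s * y) = 6 * y" for y by (metis mult.assoc)
  define b u where "b = w0/s" and "u = \<rho>/s"
  then have w0: "w0 = s*b" and \<rho>: "\<rho> = s*u"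
    using s0 by simp_all
  have "- s/2*(2*(s*b)^3/9 + (s*b)*V - 2*(s*b)*(s*u)^2 + 3*((s*u)*V)) - (s*b)^2/2 + 9/2*(s*u)^2
          + (s*(s*b)/3 + (s*b)^2/3 + V + (s*u)^2)^2
        = V^2 + V*(4*b^2 + b + 12*u^2 - 9*u) + b^2*(2*b + 1)^2 + u^2*(24*b^2 + 60*b + 27) + 36*u^4"
    by (simp add: power2_eq_square power3_eq_cube power4_eq_xxxx field_simps) (simp add: ss algebra_simps)
  then show ?thesis
    using reduced_quartic_nonneg[OF assms] unfolding w0 \<rho> s_def by simp
qed

lemma frame_polynomial_nonneg:
  fixes c w0 w1 w2 w3 w4 :: real
  assumes "c \<ge> 1/4"
  shows "- sqrt 6/2 * (2*w0^3/9 + w0*(w1^2 + w2^2) - 2*w0*(w3^2 + w4^2) + 3*(w4*(w1^2 - w2^2) + 2*w3*w1*w2))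
           - 1/2*w0^2 + 9/2*w3^2 + 9/2*w4^2
           + c * (2 * (sqrt 6/2 * (2/3*w0)) + (2/3*w0^2 + 2*(w1^2 + w2^2 + w3^2 + w4^2)))^2 \<ge> 0"
    (is "?lhs \<ge> 0")
proof -
  define V where "V = w1^2 + w2^2"
  define \<rho> where "\<rho> = sqrt (w3^2 + w4^2)"
  define S where "S = sqrt 6*w0/3 + w0^2/3 + V + \<rho>^2"
  define A where "A = - sqrt 6/2 * (2*w0^3/9 + w0*V - 2*w0*\<rho>^2) - w0^2/2 + 9/2*\<rho>^2"
  have \<rho>2: "\<rho>^2 = w3^2 + w4^2" unfolding \<rho>_def by simp
  have lhs: "?lhs = A - sqrt 6/2 * (3*(w4*(w1^2 - w2^2) + 2*w3*w1*w2)) + c * (2*S)^2"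
    unfolding A_def S_def V_def \<rho>2 by (simp add: algebra_simps)
  have "- sqrt 6/2 * (3*(w4*(w1^2 - w2^2) + 2*w3*w1*w2)) \<ge> - sqrt 6/2 * (3*(\<rho>*V))"
    using frame_cubic_term_le[of w4 w1 w2 w3] unfolding \<rho>_def V_def by simp
  moreover have "c * (2*S)^2 \<ge> S^2"
  proof -
    have "S^2 \<le> (4*c) * S^2"
      using assms mult_right_mono[of 1 "4*c" "S^2"] by simp
    then show ?thesis by (simp add: power_mult_distrib)
  qed
  moreover have "A - sqrt 6/2 * (3*(\<rho>*V)) + S^2 \<ge> 0"
    using reduced_psi_bound_nonneg[of V w0 \<rho>] unfolding A_def S_def V_def by (simp add: algebra_simps)
  ultimately show ?thesis unfolding lhs by linarith
qed

theorem lemma4p2: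
  fixes t R :: real and h :: "real \<Rightarrow> real" and x :: "real^3" and \<theta> \<phi> :: real
    and W :: mat3 and w0 w1 w2 w3 w4 :: real
  assumes "t \<ge> 0" and "R > 1"
    and "is_minimizer t R h"
    and "\<forall>r\<in>{1..R}. h r \<ge> 2/3"
    and "1 \<le> norm x" and "norm x \<le> R"
    and "0 < \<theta>" and "\<theta> < pi"
    and "x = norm x *\<^sub>R nvec \<theta> \<phi>"
    and "W \<in> S0"
    and "W = w0 *\<^sub>R Emat \<theta> \<phi> + w1 *\<^sub>R Fmat \<theta> \<phi> + w2 *\<^sub>R Gmat \<theta> \<phi>
             + w3 *\<^sub>R Xmat \<theta> \<phi> + w4 *\<^sub>R Ymat \<theta> \<phi>"
  shows "psi W w0 w3 w4
           + 3 * h (norm x) / 8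
             * (2 * mdot (sqrt (3/2) *\<^sub>R (outer (x /\<^sub>R norm x) (x /\<^sub>R norm x) - (1/3) *\<^sub>R mat 1)) W
                + mdot W W)^2 \<ge> 0"
proof -
  let ?Q = "frame \<theta> \<phi>" and ?D = "frame_coords w0 w1 w2 w3 w4"
  have W: "W = mat_conj ?Q ?D"
    using assms(11) frame_expansion_eq_mat_conj by simp
  have "x /\<^sub>R norm x = nvec \<theta> \<phi>"
    using assms(5,9) by (metis divideR_right not_one_le_zero)
  moreover have "sqrt (3/2) = sqrt 6/2"
    using real_sqrt_mult[of 4 "3/2"] by simp
  ultimately have E0: "sqrt (3/2) *\<^sub>R (outer (x /\<^sub>R norm x) (x /\<^sub>R norm x) - (1/3) *\<^sub>R mat 1)
      = (sqrt 6/2) *\<^sub>R Emat \<theta> \<phi>"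
    unfolding Emat_def by simp
  have E0_W: "mdot (sqrt (3/2) *\<^sub>R (outer (x /\<^sub>R norm x) (x /\<^sub>R norm x) - (1/3) *\<^sub>R mat 1)) W
      = sqrt 6/2 * (2/3*w0)"
    unfolding E0 mdot_scaleR_left W Emat_eq_mat_conj mdot_mat_conj[OF frame_mult_transpose]
      mdot_E_std_frame_coords by simp
  have W_W: "mdot W W = 2/3*w0^2 + 2*(w1^2 + w2^2 + w3^2 + w4^2)"
    unfolding W mdot_mat_conj[OF frame_mult_transpose] mdot_frame_coords_self ..
  have psi_W: "psi W w0 w3 w4 = - sqrt 6/2 * (2*w0^3/9 + w0*(w1^2 + w2^2) - 2*w0*(w3^2 + w4^2)
      + 3*(w4*(w1^2 - w2^2) + 2*w3*w1*w2)) - 1/2*w0^2 + 9/2*w3^2 + 9/2*w4^2"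
    unfolding psi_def mtrace_eq_trace W mat_conj_mult[OF frame_mult_transpose]
      trace_mat_conj[OF frame_mult_transpose] trace_frame_coords_cube ..
  have "h (norm x) \<ge> 2/3"
    using assms(4-6) by simp
  then have "3 * h (norm x) / 8 \<ge> 1/4"
    by simp
  then show ?thesis
    unfolding psi_W E0_W W_W by (rule frame_polynomial_nonneg)
qed

end
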